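(* Let $I\subset\mathbb{K}[S_M]$ be an ideal and $G$ a sparse Gröbner basis of $I$ with respect to $\prec$. Then $\chi^{-1}(G)=\{\chi^{-1}(g):g\in G\}$ is a sparse Gröbner basis, with respect to $\prec_h$, of the ideal $\chi^{-1}(I)\subset\mathbb{K}[S_M^h]$ generated by the homogenizations of all elements of $I$.
   Context: Let $\mathbb{K}$ be a field of characteristic $0$, $M\subset\mathbb{R}^n$ a polytope with $0\in M$, $S_M\subset\mathbb{Z}^n$ the affine semigroup generated by $M\cap\mathbb{Z}^n$ and $S_M^h\subset\mathbb{Z}^{n+1}$ the one generated by $\{(s,1):s\in M\cap\mathbb{Z}^n\}$, both assumed pointed. $\mathbb{K}[S]$ is the semigroup algebra with monomials $X^s$, $X^sX^t=X^{s+t}$; $\mathbb{K}[S_M^h]$ is graded by $\deg X^{(s,d)}=d$. $\chi:\mathbb{K}[S_M^h]\to\mathbb{K}[S_M]$, $X^{(s,d)}\mapsto X^s$. The affine degree $\delta^A(X^s)$ is the least $d$ with $(s,d)\in S_M^h$, extended to polynomials by the maximum over the support; the homogenization of $f=\sum c_sX^s$ is $\chi^{-1}(f)=\sum c_sX^{(s,\delta^A(f))}$; the sparse degree of $f\in\mathbb{K}[S_M^h]$ is $\delta(f)=\delta^A(\chi(f))$. Fix a monomial order $<_M$ on $\mathbb{K}[S_M]$; the sparse order is $X^s\prec X^r$ iff $\delta^A(X^s)<\delta^A(X^r)$, or equality and $X^s<_MX^r$; the graded sparse order is $X^{(s,d)}\prec_hX^{(r,d')}$ iff $d<d'$, or $d=d'$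 and $X^s\prec X^r$. Divisibility: $X^{(s,d_s)}\mid_\delta X^{(r,d_r)}$ if some monomial $X^{(t,d_t)}$ satisfies $X^{(s,d_s)}X^{(t,d_t)}=X^{(r,d_r)}$ and $\delta(X^{(s,d_s)})+\delta(X^{(t,d_t)})=\delta(X^{(r,d_r)})$; for monomials of $\mathbb{K}[S_M]$, $X^s\mid_\delta X^r$ iff $\chi^{-1}(X^s)\mid_\delta\chi^{-1}(X^r)$. A sparse Gröbner basis of an ideal (of $\mathbb{K}[S_M]$ w.r.t. $\prec$, resp. of $\mathbb{K}[S_M^h]$ w.r.t. $\prec_h$) is a subset of the ideal generating it such that every nonzero element $f$ of the ideal has some element $g$ of the subset with $\mathrm{LM}(g)\mid_\delta\mathrm{LM}(f)$. *)

theory Defs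
  imports "HOL-Analysis.Analysis" "HOL-Library.Poly_Mapping" "HOL-Library.Product_Plus"
begin

(* Elements of the semigroup algebra K[S] are finitely supported functions
   S -> K, i.e. poly_mappings whose keys lie in S; X^s = Poly_Mapping.single s 1
   and the product is the convolution product of poly_mapping. *)

inductive_set monoid_gen :: "'a::monoid_add set \<Rightarrow> 'a set" for X where
  zero: "0 \<in> monoid_gen X"
| gen: "x \<in> X \<Longrightarrow> x \<in> monoid_gen X"
| add: "a \<in> monoid_gen X \<Longrightarrow> b \<in> monoid_gen X \<Longrightarrow> a + b \<in> monoid_gen X"

definition pointed :: "'a::ab_group_add set \<Rightarrow> bool" where
  "pointed S \<longleftrightarrow> (\<forall>s\<in>S. - s \<in> S \<longrightarrow> s = 0)"

definition latt :: "(real^'n) set \<Rightarrow> (int^'n) set" where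
  "latt M = {s. (\<chi> i. real_of_int (s $ i)) \<in> M}"

definition SM :: "(real^'n) set \<Rightarrow> (int^'n) set" where
  "SM M = monoid_gen (latt M)"

definition SMh :: "(real^'n) set \<Rightarrow> ((int^'n) \<times> int) set" where
  "SMh M = monoid_gen ((\<lambda>s. (s, 1)) ` latt M)"

definition alg :: "'e set \<Rightarrow> ('e \<Rightarrow>\<^sub>0 'k::zero) set" where
  "alg S = {p. Poly_Mapping.keys p \<subseteq> S}"

definition ideal_in :: "('e::monoid_add \<Rightarrow>\<^sub>0 'k::field) set \<Rightarrow> ('e \<Rightarrow>\<^sub>0 'k) set \<Rightarrow> bool" where
  "ideal_in A J \<longleftrightarrow> J \<subseteq> A \<and> 0 \<in> J \<and> (\<forall>a\<in>J. \<forall>b\<in>J. a + b \<in> J)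
      \<and> (\<forall>r\<in>A. \<forall>a\<in>J. r * a \<in> J)"

definition gen_ideal :: "('e::monoid_add \<Rightarrow>\<^sub>0 'k::field) set \<Rightarrow> ('e \<Rightarrow>\<^sub>0 'k) set \<Rightarrow> ('e \<Rightarrow>\<^sub>0 'k) set" where
  "gen_ideal A X = \<Inter> {J. ideal_in A J \<and> X \<subseteq> J}"

definition deltaA :: "(real^'n) set \<Rightarrow> int^'n \<Rightarrow> nat" where
  "deltaA M s = (LEAST d::nat. (s, int d) \<in> SMh M)"

definition deltaA_poly :: "(real^'n) set \<Rightarrow> (int^'n \<Rightarrow>\<^sub>0 'k::zero) \<Rightarrow> nat" where
  "deltaA_poly M f = Max (insert 0 (deltaA M ` Poly_Mapping.keys f))"

definition homog :: "(real^'n) set \<Rightarrow> (int^'n \<Rightarrow>\<^sub>0 'k::comm_monoid_add) \<Rightarrow> ((int^'n) \<times> int \<Rightarrow>\<^sub>0 'k)" where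
  "homog M f = (\<Sum>s\<in>Poly_Mapping.keys f. Poly_Mapping.single (s, int (deltaA_poly M f)) (Poly_Mapping.lookup f s))"

definition chi :: "((int^'n) \<times> int \<Rightarrow>\<^sub>0 'k::comm_monoid_add) \<Rightarrow> (int^'n \<Rightarrow>\<^sub>0 'k)" where
  "chi F = (\<Sum>x\<in>Poly_Mapping.keys F. Poly_Mapping.single (fst x) (Poly_Mapping.lookup F x))"

definition sdeg :: "(real^'n) set \<Rightarrow> ((int^'n) \<times> int \<Rightarrow>\<^sub>0 'k::comm_monoid_add) \<Rightarrow> nat" where
  "sdeg M F = deltaA_poly M (chi F)"

definition monomial_order :: "'e::monoid_add set \<Rightarrow> ('e \<Rightarrow> 'e \<Rightarrow> bool) \<Rightarrow> bool" where
  "monomial_order S ord \<longleftrightarrow>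
     (\<forall>s\<in>S. \<not> ord s s)
   \<and> (\<forall>s\<in>S. \<forall>t\<in>S. \<forall>u\<in>S. ord s t \<longrightarrow> ord t u \<longrightarrow> ord s u)
   \<and> (\<forall>s\<in>S. \<forall>t\<in>S. s \<noteq> t \<longrightarrow> ord s t \<or> ord t s)
   \<and> (\<forall>s\<in>S. \<forall>t\<in>S. \<forall>u\<in>S. ord s t \<longrightarrow> ord (s + u) (t + u))
   \<and> (\<forall>s\<in>S. s \<noteq> 0 \<longrightarrow> ord 0 s)"

definition sparse_less :: "(real^'n) set \<Rightarrow> (int^'n \<Rightarrow> int^'n \<Rightarrow> bool) \<Rightarrow> int^'n \<Rightarrow> int^'n \<Rightarrow> bool" where
  "sparse_less M ord s r \<longleftrightarrow> deltaA M s < deltaA M r \<or> (deltaA M s = deltaA M r \<and> ord s r)"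

definition gsparse_less :: "(real^'n) set \<Rightarrow> (int^'n \<Rightarrow> int^'n \<Rightarrow> bool)
    \<Rightarrow> (int^'n) \<times> int \<Rightarrow> (int^'n) \<times> int \<Rightarrow> bool" where
  "gsparse_less M ord a b \<longleftrightarrow> snd a < snd b \<or> (snd a = snd b \<and> sparse_less M ord (fst a) (fst b))"

definition LM :: "('e \<Rightarrow> 'e \<Rightarrow> bool) \<Rightarrow> ('e \<Rightarrow>\<^sub>0 'k::zero) \<Rightarrow> 'e" where
  "LM lt p = (THE m. m \<in> Poly_Mapping.keys p \<and> (\<forall>m'\<in>Poly_Mapping.keys p. m' \<noteq> m \<longrightarrow> lt m' m))"

(* sparse divisibility on monomials of K[S_M^h];
   delta(X^(s,d)) = deltaA(chi(X^(s,d))) = deltaA(X^s) *)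
definition sdvd_h :: "(real^'n) set \<Rightarrow> (int^'n) \<times> int \<Rightarrow> (int^'n) \<times> int \<Rightarrow> bool" where
  "sdvd_h M a b \<longleftrightarrow> (\<exists>t\<in>SMh M. a + t = b
       \<and> sdeg M (Poly_Mapping.single a (1::real)) + sdeg M (Poly_Mapping.single t (1::real))
           = sdeg M (Poly_Mapping.single b (1::real)))"

definition sdvd :: "(real^'n) set \<Rightarrow> int^'n \<Rightarrow> int^'n \<Rightarrow> bool" where
  "sdvd M s r \<longleftrightarrow> sdvd_h M (s, int (deltaA M s)) (r, int (deltaA M r))"

definition sparse_GB ::
  "('e::monoid_add \<Rightarrow>\<^sub>0 'k::field) set \<Rightarrow> ('e \<Rightarrow> 'e \<Rightarrow> bool) \<Rightarrow> ('e \<Rightarrow> 'e \<Rightarrow> bool)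
     \<Rightarrow> ('e \<Rightarrow>\<^sub>0 'k) set \<Rightarrow> ('e \<Rightarrow>\<^sub>0 'k) set \<Rightarrow> bool" where
  "sparse_GB A lt dv J G \<longleftrightarrow> G \<subseteq> J \<and> gen_ideal A G = J
     \<and> (\<forall>f\<in>J. f \<noteq> 0 \<longrightarrow> (\<exists>g\<in>G. g \<noteq> 0 \<and> dv (LM lt g) (LM lt f)))"

end

theory Submission
  imports Defs
begin

(* Homogenizing at a fixed degree k, X^s |-> X^(s,k), is additive, and multiplying by a monomial
   X^u of K[S_M] becomes multiplying by a monomial X^(u,e) of K[S_M^h].  Since M is a polytope,
   only finitely many monomials have affine degree at most k, so the sparse division of f in I by G
   terminates, and carried out at degree k >= delta(f) it writes chi^-1(f) as a K[S_M^h]-combination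
   of the chi^-1(g).  Hence chi^-1(G) and chi^-1(I) generate the same ideal J.  Conversely, every
   homogeneous component of an element of J dehomogenizes into I.  The leading monomial (r,d) of
   F in J is the leading monomial r of its top component, which LM(g) sparsely divides for some g
   in G, and the quotient can be lifted from degree delta(r) to degree d because 0 is in M. *)

lemma lookup_single_mult:
  fixes p :: "'e::ab_group_add \<Rightarrow>\<^sub>0 'k::semiring_0"
  shows "Poly_Mapping.lookup (Poly_Mapping.single a c * p) x = c * Poly_Mapping.lookup p (x - a)"
proof -
  have shift: "(\<lambda>q. Poly_Mapping.lookup p q when x = l + q) = (\<lambda>q. Poly_Mapping.lookup p q when q = x - l)" for l
    by (rule ext) (simp add: when_def eq_diff_eq add.commute)
  have "Poly_Mapping.lookup (Poly_Mapping.single a c * p) x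
      = (\<Sum>l. (c when a = l) * (\<Sum>q. Poly_Mapping.lookup p q when x = l + q))"
    unfolding lookup_mult lookup_single ..
  also have "\<dots> = (\<Sum>l. (c * Poly_Mapping.lookup p (x - l)) when a = l)"
    unfolding shift Sum_any_when_equal when_mult ..
  also have "\<dots> = c * Poly_Mapping.lookup p (x - a)"
    by (rule Sum_any_when_equal')
  finally show ?thesis .
qed

lemma poly_mapping_sum_single:
  "p = (\<Sum>a\<in>Poly_Mapping.keys p. Poly_Mapping.single a (Poly_Mapping.lookup p a))"
  by (rule poly_mapping_eqI) (simp add: lookup_sum lookup_single when_def in_keys_iff)

subsection \<open>Ideals of semigroup algebras\<close>

lemma alg_add:
  fixes p q :: "'e \<Rightarrow>\<^sub>0 'k::monoid_add"
  shows "p \<in> alg S \<Longrightarrow> q \<in> alg S \<Longrightarrow> p + q \<in> alg S"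
  unfolding alg_def using keys_add[of p q] by auto

lemma alg_mult:
  fixes p q :: "'e::comm_monoid_add \<Rightarrow>\<^sub>0 'k::semiring_0"
  assumes "p \<in> alg (monoid_gen X)" "q \<in> alg (monoid_gen X)"
  shows "p * q \<in> alg (monoid_gen X)"
  unfolding alg_def mem_Collect_eq
proof
  fix x assume "x \<in> Poly_Mapping.keys (p * q)"
  then obtain a b where "x = a + b" "a \<in> Poly_Mapping.keys p" "b \<in> Poly_Mapping.keys q"
    using keys_mult[of p q] by blast
  then show "x \<in> monoid_gen X"
    using assms unfolding alg_def by (blast intro: monoid_gen.add)
qed

lemma ideal_in_alg:
  "ideal_in (alg (monoid_gen X)) (alg (monoid_gen X) :: ('e::comm_monoid_add \<Rightarrow>\<^sub>0 'k::field) set)"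
proof -
  have "0 \<in> alg (monoid_gen X)"
    by (simp add: alg_def)
  then show ?thesis
    unfolding ideal_in_def using alg_add alg_mult by blast
qed

lemma ideal_in_alg_SMh: "ideal_in (alg (SMh M)) (alg (SMh M) :: (_ \<Rightarrow>\<^sub>0 'k::field) set)"
  unfolding SMh_def by (rule ideal_in_alg)

lemma
  assumes "ideal_in A J"
  shows ideal_in_subset: "J \<subseteq> A"
    and ideal_in_zero: "0 \<in> J"
    and ideal_in_add: "a \<in> J \<Longrightarrow> b \<in> J \<Longrightarrow> a + b \<in> J"
    and ideal_in_mult: "r \<in> A \<Longrightarrow> a \<in> J \<Longrightarrow> r * a \<in> J"
  using assms unfolding ideal_in_def by blast+

lemma ideal_in_sum:
  assumes "ideal_in A J" "\<And>x. x \<in> S \<Longrightarrow> h x \<in> J"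
  shows "sum h S \<in> J"
  using assms(2)
proof (induction S rule: infinite_finite_induct)
  case (insert x S)
  then show ?case by (simp add: ideal_in_add[OF assms(1)])
qed (simp_all add: ideal_in_zero[OF assms(1)])

lemma ideal_in_gen_ideal:
  assumes "ideal_in A A" "X \<subseteq> A"
  shows "ideal_in A (gen_ideal A X)"
  unfolding gen_ideal_def ideal_in_def[of A "\<Inter> {J. ideal_in A J \<and> X \<subseteq> J}"]
proof (intro conjI ballI)
  show "\<Inter> {J. ideal_in A J \<and> X \<subseteq> J} \<subseteq> A"
    using assms by blast
qed (auto simp: ideal_in_def)

lemma gen_ideal_superset: "X \<subseteq> gen_ideal A X"
  unfolding gen_ideal_def by blast

lemma gen_ideal_least: "ideal_in A J \<Longrightarrow> X \<subseteq> J \<Longrightarrow> gen_ideal A X \<subseteq> J"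
  unfolding gen_ideal_def by blast

subsection \<open>Strict total orders and leading monomials\<close>

definition strict_total_on :: "'a set \<Rightarrow> ('a \<Rightarrow> 'a \<Rightarrow> bool) \<Rightarrow> bool" where
  "strict_total_on K lt \<longleftrightarrow> (\<forall>a\<in>K. \<not> lt a a)
     \<and> (\<forall>a\<in>K. \<forall>b\<in>K. \<forall>c\<in>K. lt a b \<longrightarrow> lt b c \<longrightarrow> lt a c)
     \<and> (\<forall>a\<in>K. \<forall>b\<in>K. a \<noteq> b \<longrightarrow> lt a b \<or> lt b a)"

lemma
  assumes "strict_total_on K lt"
  shows strict_total_on_irrefl: "a \<in> K \<Longrightarrow> \<not> lt a a"
    and strict_total_on_trans: "a \<in> K \<Longrightarrow> b \<in> K \<Longrightarrow> c \<in> K \<Longrightarrow> lt a b \<Longrightarrow> lt b c \<Longrightarrow> lt a c"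
    and strict_total_on_total: "a \<in> K \<Longrightarrow> b \<in> K \<Longrightarrow> a \<noteq> b \<Longrightarrow> lt a b \<or> lt b a"
  using assms unfolding strict_total_on_def by (elim conjE, meson)+

lemma strict_total_on_subset: "strict_total_on K lt \<Longrightarrow> K' \<subseteq> K \<Longrightarrow> strict_total_on K' lt"
  unfolding strict_total_on_def by (meson subsetD)

lemma strict_total_on_converse: "strict_total_on K lt \<Longrightarrow> strict_total_on K (\<lambda>a b. lt b a)"
  unfolding strict_total_on_def by meson

lemma strict_total_on_inj_on:
  assumes "inj_on f K" "strict_total_on (f ` K) lt"
  shows "strict_total_on K (\<lambda>a b. lt (f a) (f b))"
  unfolding strict_total_on_def
proof (intro conjI ballI impI)
  fix a b assume "a \<in> K" "b \<in> K" "a \<noteq> b"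
  then have "f a \<noteq> f b"
    using assms(1) by (meson inj_on_eq_iff)
  then show "lt (f a) (f b) \<or> lt (f b) (f a)"
    using assms(2) \<open>a \<in> K\<close> \<open>b \<in> K\<close> unfolding strict_total_on_def by blast
qed (use assms(2) in \<open>unfold strict_total_on_def, blast+\<close>)
lemma strict_total_on_lex:
  fixes w :: "'a \<Rightarrow> 'b::linorder"
  assumes level: "\<And>a. a \<in> K \<Longrightarrow> strict_total_on {b \<in> K. w b = w a} lt"
  shows "strict_total_on K (\<lambda>a b. w a < w b \<or> w a = w b \<and> lt a b)"
  unfolding strict_total_on_def
proof (intro conjI ballI impI)
  fix a assume "a \<in> K"
  then show "\<not> (w a < w a \<or> w a = w a \<and> lt a a)"
    using strict_total_on_irrefl[OF level] by simp
next
  fix a b c assume abc: "a \<in> K" "b \<in> K" "c \<in> K"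
    and ab: "w a < w b \<or> w a = w b \<and> lt a b" and bc: "w b < w c \<or> w b = w c \<and> lt b c"
  show "w a < w c \<or> w a = w c \<and> lt a c"
  proof (cases "w a = w b \<and> w b = w c")
    case True
    then have "lt a c"
      using ab bc abc strict_total_on_trans[OF level[OF \<open>a \<in> K\<close>], of a b c] by simp
    then show ?thesis using True by simp
  next
    case False
    then show ?thesis using ab bc by auto
  qed
next
  fix a b assume "a \<in> K" "b \<in> K" "a \<noteq> b"
  then show "(w a < w b \<or> w a = w b \<and> lt a b) \<or> (w b < w a \<or> w b = w a \<and> lt b a)"
    using strict_total_on_total[OF level[OF \<open>a \<in> K\<close>], of a b] by auto
qed

lemma wf_strict_total_on:
  assumes "finite K" "strict_total_on K lt"
  shows "wf {(a, b). a \<in> K \<and> b \<in> K \<and> lt a b}" (is "wf ?R")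
proof (rule finite_acyclic_wf)
  show "finite ?R"
    using finite_subset[of ?R "K \<times> K"] assms(1) by blast
  have "trans ?R"
  proof (rule transI)
    fix x y z assume "(x, y) \<in> ?R" "(y, z) \<in> ?R"
    then show "(x, z) \<in> ?R"
      using assms(2) unfolding strict_total_on_def by blast
  qed
  moreover have "irrefl ?R"
    using assms(2) unfolding strict_total_on_def irrefl_def by simp
  ultimately show "acyclic ?R"
    by (simp add: acyclic_irrefl trancl_id)
qed

lemma strict_total_on_has_greatest:
  assumes "finite K" "K \<noteq> {}" "strict_total_on K lt"
  obtains m where "m \<in> K" "\<And>x. x \<in> K \<Longrightarrow> x \<noteq> m \<Longrightarrow> lt x m"
proof -
  obtain m where "m \<in> K" and minimal: "\<And>y. (y, m) \<in> {(a, b). a \<in> K \<and> b \<in> K \<and> lt b a} \<Longrightarrow> y \<notin> K"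
    by (rule wfE_min'[OF wf_strict_total_on[OF assms(1) strict_total_on_converse[OF assms(3)]] assms(2)]) blast
  then have maximal: "\<not> lt m y" if "y \<in> K" for y
    using that by blast
  show thesis
  proof (rule that[OF \<open>m \<in> K\<close>])
    fix x assume "x \<in> K" "x \<noteq> m"
    then show "lt x m"
      using strict_total_on_total[OF assms(3) \<open>x \<in> K\<close> \<open>m \<in> K\<close>] maximal by blast
  qed
qed

lemma LM_eqI:
  assumes "strict_total_on (Poly_Mapping.keys p) lt" "m \<in> Poly_Mapping.keys p"
    "\<And>x. x \<in> Poly_Mapping.keys p \<Longrightarrow> x \<noteq> m \<Longrightarrow> lt x m"
  shows "LM lt p = m"
  unfolding LM_def
proof (rule the_equality)
  fix m' assume m': "m' \<in> Poly_Mapping.keys p \<and> (\<forall>x\<in>Poly_Mapping.keys p. x \<noteq> m' \<longrightarrow> lt x m')"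
  show "m' = m"
  proof (rule ccontr)
    assume "m' \<noteq> m"
    then have "lt m m'" "lt m' m"
      using assms(2,3) m' by auto
    then show False
      using strict_total_on_trans[OF assms(1) assms(2) _ assms(2)] strict_total_on_irrefl[OF assms(1) assms(2)] m'
      by blast
  qed
qed (use assms in blast)

lemma
  assumes "strict_total_on (Poly_Mapping.keys p) lt" "p \<noteq> 0"
  shows LM_in_keys: "LM lt p \<in> Poly_Mapping.keys p"
    and less_LM: "x \<in> Poly_Mapping.keys p \<Longrightarrow> x \<noteq> LM lt p \<Longrightarrow> lt x (LM lt p)"
proof -
  obtain m where "m \<in> Poly_Mapping.keys p" "\<And>x. x \<in> Poly_Mapping.keys p \<Longrightarrow> x \<noteq> m \<Longrightarrow> lt x m"
    using strict_total_on_has_greatest[OF finite_keys _ assms(1)] assms(2) by auto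
  moreover from this have "LM lt p = m"
    by (rule LM_eqI[OF assms(1)])
  ultimately show "LM lt p \<in> Poly_Mapping.keys p"
    and "x \<in> Poly_Mapping.keys p \<Longrightarrow> x \<noteq> LM lt p \<Longrightarrow> lt x (LM lt p)" by auto
qed

subsection \<open>The semigroups and the affine degree\<close>

lemma SMh_add: "a \<in> SMh M \<Longrightarrow> b \<in> SMh M \<Longrightarrow> a + b \<in> SMh M"
  unfolding SMh_def by (rule monoid_gen.add)

lemma fst_SMh_in_SM: "x \<in> SMh M \<Longrightarrow> fst x \<in> SM M"
  unfolding SMh_def SM_def
  by (induction rule: monoid_gen.induct) (auto intro: monoid_gen.intros)

lemma SMh_imp_sum_list:
  "x \<in> SMh M \<Longrightarrow> \<exists>ys. set ys \<subseteq> latt M \<and> x = (sum_list ys, int (length ys))"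
  unfolding SMh_def
proof (induction rule: monoid_gen.induct)
  case zero
  show ?case by (rule exI[of _ "[]"]) (simp add: zero_prod_def)
next
  case (gen x)
  then obtain s where "s \<in> latt M" "x = (s, 1)" by blast
  then show ?case by (intro exI[of _ "[s]"]) auto
next
  case (add a b)
  then obtain ys zs where "set ys \<subseteq> latt M" "a = (sum_list ys, int (length ys))"
    "set zs \<subseteq> latt M" "b = (sum_list zs, int (length zs))" by blast
  then show ?case by (intro exI[of _ "ys @ zs"]) auto
qed

lemma SM_imp_SMh: "s \<in> SM M \<Longrightarrow> \<exists>d::nat. (s, int d) \<in> SMh M"
  unfolding SM_def
proof (induction rule: monoid_gen.induct)
  case zero
  show ?case unfolding SMh_def by (rule exI[of _ 0]) (metis monoid_gen.zero of_nat_0 zero_prod_def)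
next
  case (gen x)
  then show ?case unfolding SMh_def by (intro exI[of _ 1]) (auto intro: monoid_gen.gen)
next
  case (add a b)
  then obtain d e where "(a, int d) \<in> SMh M" "(b, int e) \<in> SMh M" by blast
  from SMh_add[OF this] show ?case by (intro exI[of _ "d + e"]) simp
qed

lemma SMh_deltaA: "s \<in> SM M \<Longrightarrow> (s, int (deltaA M s)) \<in> SMh M"
  unfolding deltaA_def by (rule LeastI_ex) (rule SM_imp_SMh)

lemma deltaA_least: "(s, int d) \<in> SMh M \<Longrightarrow> deltaA M s \<le> d"
  unfolding deltaA_def by (rule Least_le)

lemma deltaA_le_snd:
  assumes "(s, e) \<in> SMh M"
  shows "int (deltaA M s) \<le> e"
proof -
  obtain ys where "(s, e) = (sum_list ys, int (length ys))"
    using SMh_imp_sum_list[OF assms] by blast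
  then show ?thesis
    using deltaA_least[of s "length ys" M] assms by simp
qed

lemma deltaA_add_le:
  assumes "s \<in> SM M" "u \<in> SM M"
  shows "deltaA M (s + u) \<le> deltaA M s + deltaA M u"
  using SMh_add[OF SMh_deltaA[OF assms(1)] SMh_deltaA[OF assms(2)]] by (simp add: deltaA_least)

lemma SMh_raise_degree:
  fixes M :: "(real^'n) set"
  assumes "0 \<in> M" "(s, e) \<in> SMh M" "e \<le> e'"
  shows "(s, e') \<in> SMh M"
proof -
  have "0 \<in> latt M"
    using assms(1) by (simp add: latt_def vec_eq_iff zero_vec_def)
  then have one: "(0, 1) \<in> SMh M"
    unfolding SMh_def by (auto intro: monoid_gen.gen)
  have "(s, e + int n) \<in> SMh M" for n
  proof (induction n)
    case (Suc n)
    from SMh_add[OF Suc one] show ?case by (simp add: algebra_simps)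
  qed (simp add: assms(2))
  from this[of "nat (e' - e)"] show ?thesis
    using assms(3) by simp
qed

lemma finite_latt:
  fixes M :: "(real^'n) set"
  assumes "polytope M"
  shows "finite (latt M)"
proof -
  obtain B where B: "\<And>x. x \<in> M \<Longrightarrow> norm x \<le> B"
    using compact_imp_bounded[OF polytope_imp_compact[OF assms]] unfolding bounded_iff by blast
  define N where "N = \<lceil>B\<rceil>"
  have "latt M \<subseteq> vec_lambda ` (PiE UNIV (\<lambda>_. {-N..N}))"
  proof
    fix s assume "s \<in> latt M"
    then have "norm (\<chi> i. real_of_int (s $ i)) \<le> B"
      unfolding latt_def using B by blast
    then have bound: "\<bar>s $ i\<bar> \<le> N" for i
      using component_le_norm_cart[of "\<chi> i. real_of_int (s $ i)" i] unfolding N_def by simp linarith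
    have "s $ i \<in> {-N..N}" for i
      using bound[of i] by (simp add: abs_le_iff)
    then have "(\<lambda>i. s $ i) \<in> PiE UNIV (\<lambda>_. {-N..N})"
      by (simp add: PiE_iff)
    then show "s \<in> vec_lambda ` (PiE UNIV (\<lambda>_. {-N..N}))"
      by (rule rev_image_eqI) simp
  qed
  then show ?thesis
    by (rule finite_subset) (intro finite_imageI finite_PiE; simp)
qed

lemma finite_deltaA_le:
  assumes "polytope M"
  shows "finite {s \<in> SM M. deltaA M s \<le> k}"
proof (rule finite_subset)
  show "{s \<in> SM M. deltaA M s \<le> k} \<subseteq> (\<Union>d\<le>k. sum_list ` {ys. set ys \<subseteq> latt M \<and> length ys = d})"
  proof
    fix s assume "s \<in> {s \<in> SM M. deltaA M s \<le> k}"
    moreover obtain ys where "set ys \<subseteq> latt M" "(s, int (deltaA M s)) = (sum_list ys, int (length ys))"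
      using SMh_imp_sum_list[OF SMh_deltaA] calculation by blast
    ultimately show "s \<in> (\<Union>d\<le>k. sum_list ` {ys. set ys \<subseteq> latt M \<and> length ys = d})"
      by auto
  qed
  show "finite (\<Union>d\<le>k. sum_list ` {ys. set ys \<subseteq> latt M \<and> length ys = d})"
    using finite_lists_length_eq[OF finite_latt[OF assms]] by blast
qed

lemma sdeg_single: "sdeg M (Poly_Mapping.single a (1::real)) = deltaA M (fst a)"
  by (simp add: sdeg_def chi_def deltaA_poly_def)

lemma deltaA_le_deltaA_poly: "s \<in> Poly_Mapping.keys f \<Longrightarrow> deltaA M s \<le> deltaA_poly M f"
  unfolding deltaA_poly_def by (rule Max_ge) auto

lemma deltaA_poly_le: "(\<And>s. s \<in> Poly_Mapping.keys f \<Longrightarrow> deltaA M s \<le> k) \<Longrightarrow> deltaA_poly M f \<le> k"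
  unfolding deltaA_poly_def by (subst Max_le_iff) auto

subsection \<open>Sparse orders\<close>

lemma strict_total_on_monomial_order: "monomial_order S ord \<Longrightarrow> strict_total_on S ord"
  unfolding monomial_order_def strict_total_on_def by (elim conjE) (intro conjI; assumption)

lemma monomial_order_add_right:
  "monomial_order S ord \<Longrightarrow> s \<in> S \<Longrightarrow> t \<in> S \<Longrightarrow> u \<in> S \<Longrightarrow> ord s t \<Longrightarrow> ord (s + u) (t + u)"
  unfolding monomial_order_def by (elim conjE) meson

lemma sparse_less_imp_deltaA_le: "sparse_less M ord s r \<Longrightarrow> deltaA M s \<le> deltaA M r"
  unfolding sparse_less_def by auto

lemma strict_total_on_sparse_less:
  assumes "monomial_order (SM M) ord"
  shows "strict_total_on (SM M) (sparse_less M ord)"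
  unfolding sparse_less_def[abs_def]
proof (rule strict_total_on_lex)
  fix a
  show "strict_total_on {b \<in> SM M. deltaA M b = deltaA M a} ord"
    by (rule strict_total_on_subset[OF strict_total_on_monomial_order[OF assms]]) blast
qed

lemma strict_total_on_gsparse_less:
  assumes "monomial_order (SM M) ord"
  shows "strict_total_on (SMh M) (gsparse_less M ord)"
  unfolding gsparse_less_def[abs_def]
proof (rule strict_total_on_lex)
  fix a
  have "inj_on fst {b \<in> SMh M. snd b = snd a}"
    by (rule inj_onI) (simp add: prod_eq_iff)
  moreover have "fst ` {b \<in> SMh M. snd b = snd a} \<subseteq> SM M"
    using fst_SMh_in_SM by blast
  ultimately show "strict_total_on {b \<in> SMh M. snd b = snd a} (\<lambda>x y. sparse_less M ord (fst x) (fst y))"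
    using strict_total_on_inj_on strict_total_on_subset[OF strict_total_on_sparse_less[OF assms]]
    by blast
qed

lemma sparse_less_add_right:
  assumes "monomial_order (SM M) ord" "s \<in> SM M" "t \<in> SM M" "u \<in> SM M"
    and "sparse_less M ord s t" and additive: "deltaA M (t + u) = deltaA M t + deltaA M u"
  shows "sparse_less M ord (s + u) (t + u)"
proof (cases "deltaA M (s + u) < deltaA M (t + u)")
  case False
  have "deltaA M (s + u) \<le> deltaA M s + deltaA M u"
    using deltaA_add_le assms(2,4) by blast
  moreover have "deltaA M s \<le> deltaA M t"
    using sparse_less_imp_deltaA_le[OF assms(5)] .
  ultimately have "deltaA M s = deltaA M t" "deltaA M (s + u) = deltaA M (t + u)"
    using False additive by linarith+
  then show ?thesis
    using assms(5) monomial_order_add_right[OF assms(1-4)] unfolding sparse_less_def by simp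
qed (simp add: sparse_less_def)

lemma strict_total_on_keys: "strict_total_on S lt \<Longrightarrow> f \<in> alg S \<Longrightarrow> strict_total_on (Poly_Mapping.keys f) lt"
  unfolding alg_def by (erule strict_total_on_subset) simp

lemma deltaA_poly_eq_deltaA_LM:
  assumes "strict_total_on (Poly_Mapping.keys f) (sparse_less M ord)" "f \<noteq> 0"
  shows "deltaA_poly M f = deltaA M (LM (sparse_less M ord) f)"
proof (rule antisym)
  show "deltaA_poly M f \<le> deltaA M (LM (sparse_less M ord) f)"
    using less_LM[OF assms] sparse_less_imp_deltaA_le by (metis deltaA_poly_le order_refl)
  show "deltaA M (LM (sparse_less M ord) f) \<le> deltaA_poly M f"
    by (rule deltaA_le_deltaA_poly[OF LM_in_keys[OF assms]])
qed

subsection \<open>Homogenization at a prescribed degree and degree slices\<close>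

definition homog_at :: "nat \<Rightarrow> (int^'n \<Rightarrow>\<^sub>0 'k::comm_monoid_add) \<Rightarrow> ((int^'n) \<times> int \<Rightarrow>\<^sub>0 'k)" where
  "homog_at k f = (\<Sum>s\<in>Poly_Mapping.keys f. Poly_Mapping.single (s, int k) (Poly_Mapping.lookup f s))"

lemma homog_eq_homog_at: "homog M f = homog_at (deltaA_poly M f) f"
  unfolding homog_def homog_at_def ..

lemma lookup_homog_at:
  "Poly_Mapping.lookup (homog_at k f) x = (if snd x = int k then Poly_Mapping.lookup f (fst x) else 0)"
proof -
  have "Poly_Mapping.lookup (homog_at k f) x
      = (\<Sum>s\<in>Poly_Mapping.keys f. if s = fst x \<and> snd x = int k then Poly_Mapping.lookup f s else 0)"
    unfolding homog_at_def lookup_sum lookup_single when_def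
    by (intro sum.cong refl) (metis prod.collapse fst_conv snd_conv)
  also have "\<dots> = (if snd x = int k then Poly_Mapping.lookup f (fst x) else 0)"
    by (simp add: in_keys_iff)
  finally show ?thesis .
qed

lemma keys_homog_at: "Poly_Mapping.keys (homog_at k f) = (\<lambda>s. (s, int k)) ` Poly_Mapping.keys f"
  by (rule set_eqI) (force simp: in_keys_iff lookup_homog_at)

lemma homog_at_zero [simp]: "homog_at k 0 = 0"
  unfolding homog_at_def by simp

lemma homog_at_in_alg:
  assumes "0 \<in> M" "f \<in> alg (SM M)" "deltaA_poly M f \<le> k"
  shows "homog_at k f \<in> alg (SMh M)"
proof -
  have "(s, int k) \<in> SMh M" if "s \<in> Poly_Mapping.keys f" for s
  proof (rule SMh_raise_degree[OF assms(1) SMh_deltaA])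
    show "s \<in> SM M"
      using that assms(2) unfolding alg_def by blast
    show "int (deltaA M s) \<le> int k"
      using deltaA_le_deltaA_poly[OF that, of M] assms(3) by simp
  qed
  then show ?thesis
    unfolding alg_def by (auto simp: keys_homog_at)
qed

lemma homog_in_alg: "0 \<in> M \<Longrightarrow> f \<in> alg (SM M) \<Longrightarrow> homog M f \<in> alg (SMh M)"
  unfolding homog_eq_homog_at by (erule homog_at_in_alg) simp_all

lemma homog_at_add_single_mult:
  fixes f g :: "int^'n \<Rightarrow>\<^sub>0 'k::comm_ring_1"
  shows "homog_at k (f + Poly_Mapping.single u c * g)
    = homog_at k f + Poly_Mapping.single (u, int k - int (deltaA_poly M g)) c * homog M g"
proof (rule poly_mapping_eqI)
  fix x :: "(int^'n) \<times> int"
  obtain s e where "x = (s, e)" by (cases x)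
  then show "Poly_Mapping.lookup (homog_at k (f + Poly_Mapping.single u c * g)) x
    = Poly_Mapping.lookup (homog_at k f + Poly_Mapping.single (u, int k - int (deltaA_poly M g)) c * homog M g) x"
    by (simp add: lookup_add lookup_single_mult homog_eq_homog_at lookup_homog_at)
qed

definition deg_part :: "int \<Rightarrow> ((int^'n) \<times> int \<Rightarrow>\<^sub>0 'k::zero) \<Rightarrow> (int^'n \<Rightarrow>\<^sub>0 'k)" where
  "deg_part d F = Abs_poly_mapping (\<lambda>s. Poly_Mapping.lookup F (s, d))"

lemma lookup_deg_part: "Poly_Mapping.lookup (deg_part d F) s = Poly_Mapping.lookup F (s, d)"
proof -
  have "{s. Poly_Mapping.lookup F (s, d) \<noteq> 0} \<subseteq> fst ` Poly_Mapping.keys F"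
    by (force simp: in_keys_iff)
  then have "finite {s. Poly_Mapping.lookup F (s, d) \<noteq> 0}"
    by (rule finite_subset) simp
  then show ?thesis
    unfolding deg_part_def by (simp add: lookup_Abs_poly_mapping)
qed

lemma keys_deg_part: "s \<in> Poly_Mapping.keys (deg_part d F) \<longleftrightarrow> (s, d) \<in> Poly_Mapping.keys F"
  by (simp add: in_keys_iff lookup_deg_part)

lemma deg_part_zero [simp]: "deg_part d 0 = 0"
  by (rule poly_mapping_eqI) (simp add: lookup_deg_part)

lemma deg_part_sum: "deg_part d (sum h S) = (\<Sum>x\<in>S. deg_part d (h x))"
  by (rule poly_mapping_eqI) (simp add: lookup_sum lookup_deg_part)

lemma deg_part_add: "deg_part d (F + G) = deg_part d F + deg_part d G"
  by (rule poly_mapping_eqI) (simp add: lookup_add lookup_deg_part)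

lemma deg_part_single_mult:
  fixes F :: "(int^'n) \<times> int \<Rightarrow>\<^sub>0 'k::comm_ring_1"
  shows "deg_part d (Poly_Mapping.single a c * F) = Poly_Mapping.single (fst a) c * deg_part (d - snd a) F"
  by (cases a) (rule poly_mapping_eqI, simp add: lookup_deg_part lookup_single_mult)

lemma deg_part_homog_at: "deg_part d (homog_at k f) = (if d = int k then f else 0)"
  by (rule poly_mapping_eqI) (simp add: lookup_deg_part lookup_homog_at)

lemma deg_part_in_alg: "F \<in> alg (SMh M) \<Longrightarrow> deg_part d F \<in> alg (SM M)"
  unfolding alg_def using fst_SMh_in_SM by (fastforce simp: keys_deg_part)

lemma ideal_in_deg_part_preimage:
  fixes I :: "(int^'n \<Rightarrow>\<^sub>0 'k::field) set"
  assumes I: "ideal_in (alg (SM M)) I"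
  shows "ideal_in (alg (SMh M)) {F \<in> alg (SMh M). \<forall>d. deg_part d F \<in> I}"
  unfolding ideal_in_def[of _ "{F \<in> alg (SMh M). \<forall>d. deg_part d F \<in> I}"]
proof (intro conjI ballI)
  show "0 \<in> {F \<in> alg (SMh M). \<forall>d. deg_part d F \<in> I}"
    by (simp add: alg_def ideal_in_zero[OF I])
next
  fix F G assume "F \<in> {F \<in> alg (SMh M). \<forall>d. deg_part d F \<in> I}" "G \<in> {F \<in> alg (SMh M). \<forall>d. deg_part d F \<in> I}"
  then show "F + G \<in> {F \<in> alg (SMh M). \<forall>d. deg_part d F \<in> I}"
    by (simp add: alg_add deg_part_add ideal_in_add[OF I])
next
  fix r F :: "(int^'n) \<times> int \<Rightarrow>\<^sub>0 'k"
  assume r: "r \<in> alg (SMh M)" and F: "F \<in> {F \<in> alg (SMh M). \<forall>d. deg_part d F \<in> I}"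
  have "deg_part d (r * F) \<in> I" for d
  proof -
    have "deg_part d (r * F) = (\<Sum>a\<in>Poly_Mapping.keys r.
        Poly_Mapping.single (fst a) (Poly_Mapping.lookup r a) * deg_part (d - snd a) F)"
      by (subst poly_mapping_sum_single[of r])
        (simp add: sum_distrib_right deg_part_sum deg_part_single_mult)
    also have "\<dots> \<in> I"
    proof (rule ideal_in_sum[OF I])
      fix a assume "a \<in> Poly_Mapping.keys r"
      then have "fst a \<in> SM M"
        using r fst_SMh_in_SM unfolding alg_def by blast
      then have "Poly_Mapping.single (fst a) (Poly_Mapping.lookup r a) \<in> alg (SM M)"
        unfolding alg_def by simp
      then show "Poly_Mapping.single (fst a) (Poly_Mapping.lookup r a) * deg_part (d - snd a) F \<in> I"
        using ideal_in_mult[OF I] F by blast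
    qed
    finally show ?thesis .
  qed
  moreover have "r * F \<in> alg (SMh M)"
    using r F alg_mult unfolding SMh_def by blast
  ultimately show "r * F \<in> {F \<in> alg (SMh M). \<forall>d. deg_part d F \<in> I}"
    by blast
qed blast

lemma LM_homog:
  assumes mo: "monomial_order (SM M) ord" and "0 \<in> M" "g \<in> alg (SM M)" "g \<noteq> 0"
  shows "LM (gsparse_less M ord) (homog M g)
    = (LM (sparse_less M ord) g, int (deltaA M (LM (sparse_less M ord) g)))"
proof -
  let ?m = "LM (sparse_less M ord) g"
  have st: "strict_total_on (Poly_Mapping.keys g) (sparse_less M ord)"
    by (rule strict_total_on_keys[OF strict_total_on_sparse_less[OF mo] assms(3)])
  have keys: "Poly_Mapping.keys (homog M g) = (\<lambda>s. (s, int (deltaA M ?m))) ` Poly_Mapping.keys g"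
    by (simp add: homog_eq_homog_at keys_homog_at deltaA_poly_eq_deltaA_LM[OF st assms(4)])
  show ?thesis
  proof (rule LM_eqI)
    show "strict_total_on (Poly_Mapping.keys (homog M g)) (gsparse_less M ord)"
      by (rule strict_total_on_keys[OF strict_total_on_gsparse_less[OF mo] homog_in_alg[OF assms(2,3)]])
    show "(?m, int (deltaA M ?m)) \<in> Poly_Mapping.keys (homog M g)"
      using LM_in_keys[OF st assms(4)] keys by blast
    fix x assume "x \<in> Poly_Mapping.keys (homog M g)" "x \<noteq> (?m, int (deltaA M ?m))"
    then show "gsparse_less M ord x (?m, int (deltaA M ?m))"
      using less_LM[OF st assms(4)] keys unfolding gsparse_less_def by auto
  qed
qed

lemma
  assumes mo: "monomial_order (SM M) ord" and "F \<in> alg (SMh M)" "F \<noteq> 0"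
    and LM_F: "LM (gsparse_less M ord) F = (r, d)"
  shows deg_part_LM_nonzero: "deg_part d F \<noteq> 0"
    and LM_deg_part: "LM (sparse_less M ord) (deg_part d F) = r"
proof -
  have st: "strict_total_on (Poly_Mapping.keys F) (gsparse_less M ord)"
    by (rule strict_total_on_keys[OF strict_total_on_gsparse_less[OF mo] assms(2)])
  have r: "r \<in> Poly_Mapping.keys (deg_part d F)"
    using LM_in_keys[OF st assms(3)] LM_F by (simp add: keys_deg_part)
  then show "deg_part d F \<noteq> 0"
    by auto
  show "LM (sparse_less M ord) (deg_part d F) = r"
  proof (rule LM_eqI[OF _ r])
    show "strict_total_on (Poly_Mapping.keys (deg_part d F)) (sparse_less M ord)"
      by (rule strict_total_on_keys[OF strict_total_on_sparse_less[OF mo] deg_part_in_alg[OF assms(2)]])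
    fix s assume "s \<in> Poly_Mapping.keys (deg_part d F)" "s \<noteq> r"
    then have "gsparse_less M ord (s, d) (r, d)"
      using less_LM[OF st assms(3)] LM_F by (simp add: keys_deg_part)
    then show "sparse_less M ord s r"
      unfolding gsparse_less_def by simp
  qed
qed

lemma sdvdE:
  assumes "sdvd M s r"
  obtains u where "u \<in> SM M" "s + u = r" "deltaA M (s + u) = deltaA M s + deltaA M u"
    "(u, int (deltaA M r) - int (deltaA M s)) \<in> SMh M"
proof -
  obtain t where t: "t \<in> SMh M" "(s, int (deltaA M s)) + t = (r, int (deltaA M r))"
    "deltaA M s + deltaA M (fst t) = deltaA M r"
    using assms unfolding sdvd_def sdvd_h_def sdeg_single by auto
  then have "s + fst t = r" "snd t = int (deltaA M r) - int (deltaA M s)"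
    by (auto simp: prod_eq_iff)
  with t show thesis
    using that[of "fst t"] fst_SMh_in_SM[OF t(1)] by (metis prod.collapse)
qed

lemma sdvd_imp_sdvd_h:
  assumes "0 \<in> M" "sdvd M s r" "int (deltaA M r) \<le> d"
  shows "sdvd_h M (s, int (deltaA M s)) (r, d)"
proof -
  obtain u where u: "s + u = r" "deltaA M (s + u) = deltaA M s + deltaA M u"
    "(u, int (deltaA M r) - int (deltaA M s)) \<in> SMh M"
    using sdvdE[OF assms(2)] by blast
  have "(u, d - int (deltaA M s)) \<in> SMh M"
    using SMh_raise_degree[OF assms(1) u(3)] assms(3) by simp
  then show ?thesis
    unfolding sdvd_h_def sdeg_single by (rule bexI[rotated]) (use u(1,2) in simp)
qed

subsection \<open>Sparse division\<close>

lemma sparse_reduction_keys_less: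
  fixes f g :: "int^'n \<Rightarrow>\<^sub>0 'k::field"
  assumes mo: "monomial_order (SM M) ord"
    and f: "f \<in> alg (SM M)" "f \<noteq> 0" and g: "g \<in> alg (SM M)" "g \<noteq> 0" and "u \<in> SM M"
    and LM_sum: "LM (sparse_less M ord) g + u = LM (sparse_less M ord) f"
    and additive: "deltaA M (LM (sparse_less M ord) g + u) = deltaA M (LM (sparse_less M ord) g) + deltaA M u"
    and x: "x \<in> Poly_Mapping.keys (f + Poly_Mapping.single u (- c) * g)"
    and c: "c = Poly_Mapping.lookup f (LM (sparse_less M ord) f) / Poly_Mapping.lookup g (LM (sparse_less M ord) g)"
  shows "sparse_less M ord x (LM (sparse_less M ord) f)"
proof -
  let ?lt = "sparse_less M ord" and ?m = "LM (sparse_less M ord) f" and ?mg = "LM (sparse_less M ord) g"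
  have stf: "strict_total_on (Poly_Mapping.keys f) ?lt" and stg: "strict_total_on (Poly_Mapping.keys g) ?lt"
    using strict_total_on_keys[OF strict_total_on_sparse_less[OF mo]] f g by blast+
  have lookup: "Poly_Mapping.lookup f x - c * Poly_Mapping.lookup g (x - u) \<noteq> 0"
    using x by (simp add: in_keys_iff lookup_add lookup_single_mult)
  have "Poly_Mapping.lookup g ?mg \<noteq> 0"
    using LM_in_keys[OF stg g(2)] by (simp add: in_keys_iff)
  then have "x \<noteq> ?m"
    using lookup LM_sum[symmetric] c by auto
  show ?thesis
  proof (cases "Poly_Mapping.lookup f x = 0")
    case False
    then show ?thesis
      using less_LM[OF stf f(2)] \<open>x \<noteq> ?m\<close> by (simp add: in_keys_iff)
  next
    case True
    then have "x - u \<in> Poly_Mapping.keys g"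
      using lookup by (simp add: in_keys_iff)
    moreover have "x - u \<noteq> ?mg"
      using \<open>x \<noteq> ?m\<close> LM_sum by (metis diff_add_cancel)
    ultimately have "?lt (x - u) ?mg"
      by (rule less_LM[OF stg g(2)])
    then have "?lt (x - u + u) (?mg + u)"
      using sparse_less_add_right[OF mo _ _ \<open>u \<in> SM M\<close> _ additive] \<open>x - u \<in> Poly_Mapping.keys g\<close>
        LM_in_keys[OF stg g(2)] g(1) unfolding alg_def by blast
    then show ?thesis
      using LM_sum by simp
  qed
qed

lemma sparse_GB_reduction_step:
  fixes I G :: "(int^'n \<Rightarrow>\<^sub>0 'k::field) set"
  assumes "0 \<in> M" and mo: "monomial_order (SM M) ord"
    and I: "ideal_in (alg (SM M)) I"
    and GB: "sparse_GB (alg (SM M)) (sparse_less M ord) (sdvd M) I G"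
    and f: "f \<in> I" "f \<noteq> 0" "deltaA_poly M f \<le> k"
  obtains g h q where "g \<in> G" "h \<in> I" "q \<in> alg (SMh M)"
    "\<And>x. x \<in> Poly_Mapping.keys h \<Longrightarrow> sparse_less M ord x (LM (sparse_less M ord) f)"
    "homog_at k f = homog_at k h + q * homog M g"
proof -
  let ?lt = "sparse_less M ord"
  let ?m = "LM ?lt f"
  have fA: "f \<in> alg (SM M)"
    using ideal_in_subset[OF I] f(1) by blast
  obtain g where g: "g \<in> G" "g \<noteq> 0" "sdvd M (LM ?lt g) ?m"
    using GB f(1,2) unfolding sparse_GB_def by blast
  have gI: "g \<in> I"
    using GB g(1) unfolding sparse_GB_def by blast
  then have gA: "g \<in> alg (SM M)"
    using ideal_in_subset[OF I] by blast
  have stf: "strict_total_on (Poly_Mapping.keys f) ?lt" and stg: "strict_total_on (Poly_Mapping.keys g) ?lt"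
    using strict_total_on_keys[OF strict_total_on_sparse_less[OF mo]] fA gA by blast+
  obtain u where u: "u \<in> SM M" "LM ?lt g + u = ?m"
    "deltaA M (LM ?lt g + u) = deltaA M (LM ?lt g) + deltaA M u"
    "(u, int (deltaA M ?m) - int (deltaA M (LM ?lt g))) \<in> SMh M"
    using sdvdE[OF g(3)] by blast
  define c where "c = Poly_Mapping.lookup f ?m / Poly_Mapping.lookup g (LM ?lt g)"
  define h where "h = f + Poly_Mapping.single u (- c) * g"
  have "h \<in> I"
    unfolding h_def using u(1)
    by (intro ideal_in_add[OF I f(1)] ideal_in_mult[OF I _ gI]) (simp add: alg_def)
  moreover have "\<And>x. x \<in> Poly_Mapping.keys h \<Longrightarrow> ?lt x ?m"
    unfolding h_def using sparse_reduction_keys_less[OF mo fA f(2) gA g(2) u(1-3) _ c_def] .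
  moreover have "Poly_Mapping.single (u, int k - int (deltaA_poly M g)) c \<in> alg (SMh M)"
  proof -
    have "deltaA_poly M g = deltaA M (LM ?lt g)"
      by (rule deltaA_poly_eq_deltaA_LM[OF stg g(2)])
    moreover have "deltaA M ?m \<le> k"
      using deltaA_le_deltaA_poly[OF LM_in_keys[OF stf f(2)], of M] f(3) by simp
    ultimately have "(u, int k - int (deltaA_poly M g)) \<in> SMh M"
      using SMh_raise_degree[OF assms(1) u(4)] by simp
    then show ?thesis
      by (simp add: alg_def)
  qed
  moreover have "homog_at k f = homog_at k h + Poly_Mapping.single (u, int k - int (deltaA_poly M g)) c * homog M g"
  proof -
    have "f = h + Poly_Mapping.single u c * g"
      by (simp add: h_def single_uminus)
    then show ?thesis
      using homog_at_add_single_mult by metis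
  qed
  ultimately show thesis
    using that g(1) by blast
qed

lemma homog_at_in_gen_ideal:
  fixes I G :: "(int^'n \<Rightarrow>\<^sub>0 'k::field) set"
  assumes "polytope M" "0 \<in> M" and mo: "monomial_order (SM M) ord"
    and I: "ideal_in (alg (SM M)) I"
    and GB: "sparse_GB (alg (SM M)) (sparse_less M ord) (sdvd M) I G"
    and "f \<in> I" "deltaA_poly M f \<le> k"
  shows "homog_at k f \<in> gen_ideal (alg (SMh M)) (homog M ` G)"
proof -
  let ?lt = "sparse_less M ord"
  let ?K = "gen_ideal (alg (SMh M)) (homog M ` G)"
  define D where "D = {s \<in> SM M. deltaA M s \<le> k}"
  have "G \<subseteq> alg (SM M)"
    using GB ideal_in_subset[OF I] unfolding sparse_GB_def by blast
  then have K: "ideal_in (alg (SMh M)) ?K"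
    using homog_in_alg[OF assms(2)] by (intro ideal_in_gen_ideal[OF ideal_in_alg_SMh]) blast
  have wf: "wf {(a, b). a \<in> D \<and> b \<in> D \<and> ?lt a b}"
    unfolding D_def
    by (rule wf_strict_total_on[OF finite_deltaA_le[OF assms(1)]
          strict_total_on_subset[OF strict_total_on_sparse_less[OF mo]]]) blast
  have "homog_at k f \<in> ?K" if "f \<in> I" "f \<noteq> 0" "deltaA_poly M f \<le> k" "LM ?lt f = m" for m f
    using wf that
  proof (induction m arbitrary: f rule: wf_induct_rule)
    case (less m)
    obtain g h q where g: "g \<in> G" and h: "h \<in> I" and q: "q \<in> alg (SMh M)"
      and below: "\<And>x. x \<in> Poly_Mapping.keys h \<Longrightarrow> ?lt x m"
      and eq: "homog_at k f = homog_at k h + q * homog M g"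
      using sparse_GB_reduction_step[OF assms(2) mo I GB less.prems(1-3)] less.prems(4) by metis
    have "homog_at k h \<in> ?K"
    proof (cases "h = 0")
      case False
      have hA: "h \<in> alg (SM M)" and fA: "f \<in> alg (SM M)"
        using ideal_in_subset[OF I] h less.prems(1) by blast+
      have "m \<in> Poly_Mapping.keys f"
        using LM_in_keys[OF strict_total_on_keys[OF strict_total_on_sparse_less[OF mo] fA] less.prems(2)]
          less.prems(4) by simp
      then have "m \<in> D"
        using fA deltaA_le_deltaA_poly[of m f M] less.prems(3) unfolding D_def alg_def by auto
      have LM_h: "LM ?lt h \<in> Poly_Mapping.keys h"
        by (rule LM_in_keys[OF strict_total_on_keys[OF strict_total_on_sparse_less[OF mo] hA] False])
      have "deltaA_poly M h \<le> k"
        using below sparse_less_imp_deltaA_le \<open>m \<in> D\<close> unfolding D_def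
        by (intro deltaA_poly_le) (fastforce intro: order_trans)
      moreover have "LM ?lt h \<in> D"
        using LM_h hA \<open>deltaA_poly M h \<le> k\<close> deltaA_le_deltaA_poly[OF LM_h, of M]
        unfolding D_def alg_def by auto
      ultimately show ?thesis
        using less.IH[of "LM ?lt h" h] below[OF LM_h] \<open>m \<in> D\<close> h False by blast
    qed (simp add: ideal_in_zero[OF K])
    moreover have "homog M g \<in> ?K"
      using g gen_ideal_superset by blast
    ultimately show ?case
      unfolding eq using ideal_in_add[OF K] ideal_in_mult[OF K q] by blast
  qed
  then show ?thesis
    using assms(6,7) ideal_in_zero[OF K] by (cases "f = 0") auto
qed

lemma sparse_GB_sdvd_h_LM:
  fixes I G :: "(int^'n \<Rightarrow>\<^sub>0 'k::field) set"
  assumes "0 \<in> M" and mo: "monomial_order (SM M) ord"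
    and I: "ideal_in (alg (SM M)) I"
    and GB: "sparse_GB (alg (SM M)) (sparse_less M ord) (sdvd M) I G"
    and F: "F \<in> alg (SMh M)" "F \<noteq> 0" "\<And>d. deg_part d F \<in> I"
  shows "\<exists>g\<in>homog M ` G. g \<noteq> 0
    \<and> sdvd_h M (LM (gsparse_less M ord) g) (LM (gsparse_less M ord) F)"
proof -
  obtain r d where LM_F: "LM (gsparse_less M ord) F = (r, d)"
    by fastforce
  obtain g where g: "g \<in> G" "g \<noteq> 0" "sdvd M (LM (sparse_less M ord) g) r"
    using GB F(3)[of d] deg_part_LM_nonzero[OF mo F(1,2) LM_F] LM_deg_part[OF mo F(1,2) LM_F]
    unfolding sparse_GB_def by metis
  have gA: "g \<in> alg (SM M)"
    using GB ideal_in_subset[OF I] g(1) unfolding sparse_GB_def by blast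
  have "(r, d) \<in> SMh M"
    using LM_in_keys[OF strict_total_on_keys[OF strict_total_on_gsparse_less[OF mo] F(1)] F(2)] F(1) LM_F
    unfolding alg_def by auto
  then have "sdvd_h M (LM (gsparse_less M ord) (homog M g)) (r, d)"
    unfolding LM_homog[OF mo assms(1) gA g(2)] using sdvd_imp_sdvd_h[OF assms(1) g(3)] deltaA_le_snd
    by blast
  moreover have "homog M g \<noteq> 0"
    using deg_part_homog_at[of _ _ g] g(2) unfolding homog_eq_homog_at by (metis deg_part_zero)
  ultimately show ?thesis
    using g(1) LM_F by (auto intro!: bexI[of _ "homog M g"])
qed

lemma gen_ideal_homog_sparse_GB:
  fixes I G :: "(int^'n \<Rightarrow>\<^sub>0 'k::field) set"
  assumes "polytope M" "0 \<in> M" and mo: "monomial_order (SM M) ord"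
    and I: "ideal_in (alg (SM M)) I"
    and GB: "sparse_GB (alg (SM M)) (sparse_less M ord) (sdvd M) I G"
  shows "gen_ideal (alg (SMh M)) (homog M ` G) = gen_ideal (alg (SMh M)) (homog M ` I)"
proof -
  have GI: "homog M ` G \<subseteq> homog M ` I"
    using GB unfolding sparse_GB_def by blast
  have hI: "homog M ` I \<subseteq> alg (SMh M)"
    using homog_in_alg[OF assms(2)] ideal_in_subset[OF I] by blast
  show ?thesis
  proof (rule subset_antisym; rule gen_ideal_least[OF ideal_in_gen_ideal[OF ideal_in_alg_SMh]])
    show "homog M ` I \<subseteq> alg (SMh M)" "homog M ` G \<subseteq> alg (SMh M)"
      using GI hI by blast+
    show "homog M ` G \<subseteq> gen_ideal (alg (SMh M)) (homog M ` I)"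
      using GI gen_ideal_superset by (rule subset_trans)
    show "homog M ` I \<subseteq> gen_ideal (alg (SMh M)) (homog M ` G)"
      using homog_at_in_gen_ideal[OF assms _ order_refl] by (auto simp: homog_eq_homog_at)
  qed
qed

lemma deg_part_gen_ideal_homog:
  fixes I :: "(int^'n \<Rightarrow>\<^sub>0 'k::field) set"
  assumes "0 \<in> M" and I: "ideal_in (alg (SM M)) I"
    and "F \<in> gen_ideal (alg (SMh M)) (homog M ` I)"
  shows "F \<in> alg (SMh M)" "deg_part d F \<in> I"
proof -
  have "gen_ideal (alg (SMh M)) (homog M ` I) \<subseteq> {F \<in> alg (SMh M). \<forall>d. deg_part d F \<in> I}"
    by (rule gen_ideal_least[OF ideal_in_deg_part_preimage[OF I]])
      (use homog_in_alg[OF assms(1)] ideal_in_subset[OF I] ideal_in_zero[OF I]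
        in \<open>auto simp: homog_eq_homog_at deg_part_homog_at\<close>)
  then show "F \<in> alg (SMh M)" "deg_part d F \<in> I"
    using assms(3) by blast+
qed

theorem mainTheorem7:
  fixes M :: "(real^'n) set"
    and ord :: "int^'n \<Rightarrow> int^'n \<Rightarrow> bool"
    and I G :: "(int^'n \<Rightarrow>\<^sub>0 'k::field_char_0) set"
  assumes "polytope M" and "0 \<in> M"
    and "pointed (SM M)" and "pointed (SMh M)"
    and "monomial_order (SM M) ord"
    and "ideal_in (alg (SM M)) I"
    and "sparse_GB (alg (SM M)) (sparse_less M ord) (sdvd M) I G"
  shows "sparse_GB (alg (SMh M)) (gsparse_less M ord) (sdvd_h M)
           (gen_ideal (alg (SMh M)) (homog M ` I)) (homog M ` G)"
  unfolding sparse_GB_def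
proof (intro conjI ballI impI)
  show "homog M ` G \<subseteq> gen_ideal (alg (SMh M)) (homog M ` I)"
    using assms(7) gen_ideal_superset unfolding sparse_GB_def by blast
  show "gen_ideal (alg (SMh M)) (homog M ` G) = gen_ideal (alg (SMh M)) (homog M ` I)"
    by (rule gen_ideal_homog_sparse_GB[OF assms(1,2,5,6,7)])
  fix F assume F: "F \<in> gen_ideal (alg (SMh M)) (homog M ` I)" "F \<noteq> 0"
  show "\<exists>g\<in>homog M ` G. g \<noteq> 0 \<and> sdvd_h M (LM (gsparse_less M ord) g) (LM (gsparse_less M ord) F)"
    by (rule sparse_GB_sdvd_h_LM[OF assms(2,5,6,7) deg_part_gen_ideal_homog(1)[OF assms(2,6) F(1)] F(2)
          deg_part_gen_ideal_homog(2)[OF assms(2,6) F(1)]])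
qed

end
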